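(* Let $\sigma\in(0,1)$, let $\mathcal T_\bullet$ be a mesh of $\Gamma$ satisfying (M1)–(M3) together with functions $\Psi_{\bullet,T,j}$ as in (S4), and let $T\in\mathcal T_\bullet$. Then there is $C>0$, depending only on $d$, $\sigma$, $\Gamma$ and the constants in (M1)–(M3) and (S4), such that every $v\in H^\sigma(\Gamma)^D$ with $\int_\Gamma\overline{v_j}\,(\Psi_{\bullet,T,j})_j\,dx=0$ for all $j\in\{1,\dots,D\}$ satisfies $$\|h_\bullet^{-\sigma}v\|_{L^2(T)}\le C|v|_{H^\sigma(\pi_\bullet^{q_{\rm supp}}(T))}.$$
   Context: $d\ge2$, $\Omega\subset\mathbb R^d$ bounded Lipschitz, $\Gamma=\partial\Omega$, $D\ge1$. For measurable $\omega\subseteq\Gamma$: $|v|_{H^\sigma(\omega)}^2=\sum_j\int_\omega\int_\omega\frac{|v_j(x)-v_j(y)|^2}{|x-y|^{d-1+2\sigma}}dxdy$. A mesh $\mathcal T_\bullet$ is a finite set of compact sets $T=\gamma_T(\widehat T)\subseteq\Gamma$ ($\widehat T$ a compact Lipschitz domain in $\mathbb R^{d-1}$, $\gamma_T$ bi-Lipschitz) covering $\Gamma$ with pairwise intersections of measure zero; $h_\bullet|_T=h_T=|T|^{1/(d-1)}$. Patches: $\pi^0_\bullet(\omega)=\omega$, $\pi^q_\bullet(\omega)=\bigcup\{T\in\mathcal T_\bullet:T\cap\pi^{q-1}_\bullet(\omega)\ne\emptyset\}$, $\Pi^q_\bullet(\omega)=\{T:T\subseteq\pi^q_\bullet(\omega)\}$,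 $\pi_\bullet=\pi^1_\bullet$, $\Pi_\bullet=\Pi^1_\bullet$. (M1) $\#\Pi_\bullet(T)\le C_{\rm patch}$; (M2) ${\rm diam}(T)/{\rm diam}(T')\le C_{\rm locuni}$ for $T'\in\Pi_\bullet(T)$; (M3) $C_{\rm shape}^{-1}\le{\rm diam}(T)/h_T\le C_{\rm shape}$. (S4): there are $q_{\rm supp}\in\mathbb N_0$, $0<q_{\rm unity}<1$ and for each $T\in\mathcal T_\bullet$, $j\in\{1,\dots,D\}$ a function $\Psi_{\bullet,T,j}\in L^2(\Gamma)^D$ with $T\subseteq{\rm supp}(\Psi_{\bullet,T,j})\subseteq\pi^{q_{\rm supp}}_\bullet(T)$, $(\Psi_{\bullet,T,j})_{j'}=0$ for $j'\ne j$, and $\|1-(\Psi_{\bullet,T,j})_j\|_{L^2({\rm supp}\Psi_{\bullet,T,j})}\le q_{\rm unity}|{\rm supp}(\Psi_{\bullet,T,j})_j|^{1/2}$. *)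

theory Defs
  imports "HOL-Analysis.Analysis"
begin

text \<open>Normalising constant of the s-dimensional Hausdorff measure (volume of the unit s-ball).\<close>
definition hausdorff_const :: "real \<Rightarrow> real" where
  "hausdorff_const s = pi powr (s / 2) / Gamma (s / 2 + 1)"

definition hausdorff_content :: "real \<Rightarrow> real \<Rightarrow> 'a::euclidean_space set \<Rightarrow> ennreal" where
  "hausdorff_content s \<delta> A =
     (INF E \<in> {E :: nat \<Rightarrow> 'a set. A \<subseteq> (\<Union>i. E i) \<and> (\<forall>i. bounded (E i) \<and> diameter (E i) \<le> \<delta>)}.
        (\<Sum>i. ennreal (hausdorff_const s * (diameter (E i) / 2) powr s)))"

definition hausdorff_outer :: "real \<Rightarrow> 'a::euclidean_space set \<Rightarrow> ennreal" where
  "hausdorff_outer s A = (SUP \<delta> \<in> {0<..}. hausdorff_content s \<delta> A)"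

definition hausdorff_measure :: "real \<Rightarrow> 'a::euclidean_space measure" where
  "hausdorff_measure s = measure_of UNIV (sets borel) (hausdorff_outer s)"

definition surf :: "'a::euclidean_space measure" where
  "surf = hausdorff_measure (real (DIM('a) - 1))"

definition lipschitz_domain :: "'a::euclidean_space set \<Rightarrow> bool" where
  "lipschitz_domain \<Omega> \<longleftrightarrow> bounded \<Omega> \<and> open \<Omega> \<and> connected \<Omega> \<and> \<Omega> \<noteq> {} \<and>
     (\<forall>x0 \<in> frontier \<Omega>. \<exists>(e::'a) r (g::'a \<Rightarrow> real) L.
        norm e = 1 \<and> r > 0 \<and> L-lipschitz_on {y. y \<bullet> e = 0} g \<and>
        \<Omega> \<inter> ball x0 r = {x \<in> ball x0 r. x \<bullet> e < g (x - (x \<bullet> e) *\<^sub>R e)})"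

definition compact_lipschitz_domain :: "'a::euclidean_space set \<Rightarrow> bool" where
  "compact_lipschitz_domain K \<longleftrightarrow> (\<exists>U. lipschitz_domain U \<and> K = closure U)"

definition bi_lipschitz_on :: "'b::metric_space set \<Rightarrow> ('b \<Rightarrow> 'a::metric_space) \<Rightarrow> bool" where
  "bi_lipschitz_on S \<gamma> \<longleftrightarrow> (\<exists>L>0. \<forall>x\<in>S. \<forall>y\<in>S.
      dist x y \<le> L * dist (\<gamma> x) (\<gamma> y) \<and> dist (\<gamma> x) (\<gamma> y) \<le> L * dist x y)"

text \<open>A mesh of \<Gamma> whose elements are bi-Lipschitz images of compact Lipschitz domains in the
  parameter space 'b (which is meant to be R^(d-1)).\<close>
definition mesh :: "'b::euclidean_space itself \<Rightarrow> 'a::euclidean_space set \<Rightarrow> 'a set set \<Rightarrow> bool" where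
  "mesh _ \<Gamma> \<T> \<longleftrightarrow> finite \<T> \<and> \<Union>\<T> = \<Gamma> \<and>
     (\<forall>T\<in>\<T>. compact T \<and> T \<subseteq> \<Gamma> \<and>
        (\<exists>(Th::'b set) (\<gamma>::'b \<Rightarrow> 'a). compact_lipschitz_domain Th \<and> bi_lipschitz_on Th \<gamma> \<and> T = \<gamma> ` Th)) \<and>
     (\<forall>T\<in>\<T>. \<forall>T'\<in>\<T>. T \<noteq> T' \<longrightarrow> emeasure surf (T \<inter> T') = 0)"

definition elsize :: "'a::euclidean_space set \<Rightarrow> real" where
  "elsize T = measure surf T powr (1 / real (DIM('a) - 1))"

fun patch :: "'a set set \<Rightarrow> nat \<Rightarrow> 'a set \<Rightarrow> 'a set" where
  "patch \<T> 0 \<omega> = \<omega>"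
| "patch \<T> (Suc q) \<omega> = \<Union>{T \<in> \<T>. T \<inter> patch \<T> q \<omega> \<noteq> {}}"

definition patch_elems :: "'a set set \<Rightarrow> nat \<Rightarrow> 'a set \<Rightarrow> 'a set set" where
  "patch_elems \<T> q \<omega> = {T \<in> \<T>. T \<subseteq> patch \<T> q \<omega>}"

definition mesh_M1 :: "'a set set \<Rightarrow> real \<Rightarrow> bool" where
  "mesh_M1 \<T> Cpatch \<longleftrightarrow> (\<forall>T\<in>\<T>. real (card (patch_elems \<T> 1 T)) \<le> Cpatch)"

definition mesh_M2 :: "'a::euclidean_space set set \<Rightarrow> real \<Rightarrow> bool" where
  "mesh_M2 \<T> Clocuni \<longleftrightarrow> (\<forall>T\<in>\<T>. \<forall>T'\<in>patch_elems \<T> 1 T. diameter T / diameter T' \<le> Clocuni)"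

definition mesh_M3 :: "'a::euclidean_space set set \<Rightarrow> real \<Rightarrow> bool" where
  "mesh_M3 \<T> Cshape \<longleftrightarrow> (\<forall>T\<in>\<T>. 1 / Cshape \<le> diameter T / elsize T \<and> diameter T / elsize T \<le> Cshape)"

section \<open>Vector-valued functions on \<Gamma> (components indexed by 1..D)\<close>

definition L2_on :: "'a::euclidean_space set \<Rightarrow> ('a \<Rightarrow> complex) \<Rightarrow> bool" where
  "L2_on A f \<longleftrightarrow> set_borel_measurable surf A f \<and> (\<integral>\<^sup>+x\<in>A. ennreal ((cmod (f x))\<^sup>2) \<partial>surf) < \<infinity>"

definition L2_norm_sq :: "nat \<Rightarrow> 'a::euclidean_space set \<Rightarrow> ('a \<Rightarrow> nat \<Rightarrow> complex) \<Rightarrow> ennreal" where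
  "L2_norm_sq D \<omega> v = (\<Sum>j\<in>{1..D}. \<integral>\<^sup>+x\<in>\<omega>. ennreal ((cmod (v x j))\<^sup>2) \<partial>surf)"

definition Hs_semi_sq :: "nat \<Rightarrow> real \<Rightarrow> 'a::euclidean_space set \<Rightarrow> ('a \<Rightarrow> nat \<Rightarrow> complex) \<Rightarrow> ennreal" where
  "Hs_semi_sq D \<sigma> \<omega> v = (\<Sum>j\<in>{1..D}. \<integral>\<^sup>+x\<in>\<omega>. \<integral>\<^sup>+y\<in>\<omega>.
      ennreal ((cmod (v x j - v y j))\<^sup>2 / norm (x - y) powr (real (DIM('a) - 1) + 2 * \<sigma>)) \<partial>surf \<partial>surf)"

definition in_Hs :: "nat \<Rightarrow> real \<Rightarrow> 'a::euclidean_space set \<Rightarrow> ('a \<Rightarrow> nat \<Rightarrow> complex) \<Rightarrow> bool" where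
  "in_Hs D \<sigma> \<Gamma> v \<longleftrightarrow> (\<forall>j\<in>{1..D}. L2_on \<Gamma> (\<lambda>x. v x j)) \<and> Hs_semi_sq D \<sigma> \<Gamma> v < \<infinity>"

definition vsupp :: "nat \<Rightarrow> 'a::euclidean_space set \<Rightarrow> ('a \<Rightarrow> nat \<Rightarrow> complex) \<Rightarrow> 'a set" where
  "vsupp D \<Gamma> f = closure {x \<in> \<Gamma>. \<exists>j\<in>{1..D}. f x j \<noteq> 0}"

definition csupp :: "'a::euclidean_space set \<Rightarrow> ('a \<Rightarrow> complex) \<Rightarrow> 'a set" where
  "csupp \<Gamma> f = closure {x \<in> \<Gamma>. f x \<noteq> 0}"

definition S4 :: "nat \<Rightarrow> 'a::euclidean_space set \<Rightarrow> 'a set set \<Rightarrow> nat \<Rightarrow> real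
                   \<Rightarrow> ('a set \<Rightarrow> nat \<Rightarrow> 'a \<Rightarrow> nat \<Rightarrow> complex) \<Rightarrow> bool" where
  "S4 D \<Gamma> \<T> qsupp qunity \<Psi> \<longleftrightarrow> 0 < qunity \<and> qunity < 1 \<and>
     (\<forall>T\<in>\<T>. \<forall>j\<in>{1..D}.
        (\<forall>j'\<in>{1..D}. L2_on \<Gamma> (\<lambda>x. \<Psi> T j x j')) \<and>
        T \<subseteq> vsupp D \<Gamma> (\<Psi> T j) \<and> vsupp D \<Gamma> (\<Psi> T j) \<subseteq> patch \<T> qsupp T \<and>
        (\<forall>j'\<in>{1..D}. j' \<noteq> j \<longrightarrow> (\<forall>x\<in>\<Gamma>. \<Psi> T j x j' = 0)) \<and>
        sqrt (enn2real (\<integral>\<^sup>+x\<in>vsupp D \<Gamma> (\<Psi> T j). ennreal ((cmod (1 - \<Psi> T j x j))\<^sup>2) \<partial>surf))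
          \<le> qunity * sqrt (measure surf (csupp \<Gamma> (\<lambda>x. \<Psi> T j x j))))"

end

(*
  Fix a component u = v_j and let psi be the weight (Psi_{T,j})_j, supported in omega = supp psi,
  where T is contained in omega and omega in pi^{q_supp}(T).  Condition (S4) says psi is
  L^2-close to 1 on omega, which forces |int psi| >= (1 - q_unity) |omega| and
  ||psi||^2 <= 4 |omega|.  Orthogonality gives
  cnj (u x) * int psi = int (cnj (u x) - cnj (u y)) psi(y) dy, so by Cauchy-Schwarz
  (1 - q_unity)^2 |omega| |u x|^2 <= 4 int_omega |u x - u y|^2 dy for every x.
  Integrating over T, bounding |x - y| by the diameter of the patch, which is O(h_T) by (M2)
  and (M3), and using |T| = h_T^(d-1) yields the estimate with an explicit constant.
*)

theory Submission
  imports Defs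
begin

lemma norm_diff_power2_le:
  fixes a b :: "'a::real_normed_vector"
  shows "(norm (a - b))\<^sup>2 \<le> 2 * (norm a)\<^sup>2 + 2 * (norm b)\<^sup>2"
proof -
  have "(norm (a - b))\<^sup>2 \<le> (norm a + norm b)\<^sup>2"
    by (intro power_mono norm_triangle_ineq4) simp
  also have "\<dots> \<le> 2 * (norm a)\<^sup>2 + 2 * (norm b)\<^sup>2"
    using sum_squares_ge_zero[of "norm a - norm b" 0] by (simp add: power2_eq_square algebra_simps)
  finally show ?thesis .
qed

lemma ennreal_power2_le_imp_le_sqrt:
  assumes "(ennreal x)\<^sup>2 \<le> ennreal y" "0 \<le> x" "0 \<le> y"
  shows "x \<le> sqrt y"
  using assms by (simp add: ennreal_power real_le_rsqrt)

lemma mult_sqrt_enn2real_le: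
  assumes "ennreal (a\<^sup>2) * X \<le> Y" "Y < \<infinity>" "0 \<le> a"
  shows "a * sqrt (enn2real X) \<le> sqrt (enn2real Y)"
proof -
  have "a\<^sup>2 * enn2real X = enn2real (ennreal (a\<^sup>2) * X)"
    by (simp add: enn2real_mult)
  also have "\<dots> \<le> enn2real Y"
    using assms(1,2) by (intro enn2real_mono) auto
  finally have "sqrt (a\<^sup>2 * enn2real X) \<le> sqrt (enn2real Y)"
    by simp
  then show ?thesis
    using assms(3) by (simp add: real_sqrt_mult)
qed

lemma scaling_constant_le:
  fixes h d K s \<sigma> q :: real
  assumes "0 < h" "0 < d" "d \<le> K * h" "0 \<le> s" "0 \<le> \<sigma>" "q < 1"
  shows "(h powr (- \<sigma>) / (2 * K powr ((s + 2 * \<sigma>) / 2) / (1 - q)))\<^sup>2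
         \<le> (1 - q)\<^sup>2 * h powr s / 4 / d powr (s + 2 * \<sigma>)"
proof -
  define e where "e = s + 2 * \<sigma>"
  have "0 < K * h"
    using assms(2,3) by linarith
  then have K: "0 < K"
    using assms(1) by (simp add: zero_less_mult_iff)
  have "d powr e \<le> (K * h) powr e"
    using assms by (intro powr_mono2) (auto simp: e_def)
  also have "\<dots> = K powr e * h powr s * h powr (2 * \<sigma>)"
    using K assms(1) by (simp add: e_def powr_mult powr_add)
  finally have d: "d powr e \<le> K powr e * h powr s * h powr (2 * \<sigma>)" .
  have K_sq: "(K powr (e / 2))\<^sup>2 = K powr e"
    by (simp add: power2_eq_square powr_add [symmetric])
  have h_sq: "(h powr (- \<sigma>))\<^sup>2 = 1 / h powr (2 * \<sigma>)"
    using assms(1) by (simp add: power2_eq_square powr_add [symmetric] powr_minus_divide)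
  have "(h powr (- \<sigma>) / (2 * K powr (e / 2) / (1 - q)))\<^sup>2
      = (1 - q)\<^sup>2 / (4 * K powr e * h powr (2 * \<sigma>))"
    by (simp add: power_divide power_mult_distrib K_sq h_sq mult_ac)
  also have "\<dots> = (1 - q)\<^sup>2 * h powr s / 4 / (K powr e * h powr s * h powr (2 * \<sigma>))"
    using assms(1) by (simp add: field_simps)
  also have "\<dots> \<le> (1 - q)\<^sup>2 * h powr s / 4 / d powr e"
    using d assms(1,2) K by (intro divide_left_mono mult_pos_pos) auto
  finally show ?thesis
    by (simp add: e_def)
qed

lemma borel_measurable_cnj[measurable (raw)]:
  "f \<in> borel_measurable M \<Longrightarrow> (\<lambda>x. cnj (f x)) \<in> borel_measurable M"
  by (intro borel_measurable_continuous_on[where f=cnj] continuous_on_cnj continuous_on_id)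

lemma Cauchy_Schwarz_nn_integral_support:
  fixes f :: "'a \<Rightarrow> 'b::real_normed_vector"
  assumes [measurable]: "f \<in> borel_measurable M" "A \<in> sets M"
    and vanish: "\<And>x. x \<in> space M \<Longrightarrow> x \<notin> A \<Longrightarrow> f x = 0"
  shows "(\<integral>\<^sup>+x. ennreal (norm (f x)) \<partial>M)\<^sup>2 \<le> (\<integral>\<^sup>+x. ennreal ((norm (f x))\<^sup>2) \<partial>M) * emeasure M A"
proof -
  have "(\<integral>\<^sup>+x. ennreal (norm (f x)) \<partial>M) = (\<integral>\<^sup>+x. ennreal (norm (f x)) * indicator A x \<partial>M)"
    using vanish by (intro nn_integral_cong) (auto split: split_indicator)
  also have "\<dots>\<^sup>2 \<le> (\<integral>\<^sup>+x. (ennreal (norm (f x)))\<^sup>2 \<partial>M) * (\<integral>\<^sup>+x. (indicator A x)\<^sup>2 \<partial>M)"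
    by (rule Cauchy_Schwarz_nn_integral) auto
  also have "(\<integral>\<^sup>+x. (indicator A x :: ennreal)\<^sup>2 \<partial>M) = (\<integral>\<^sup>+x. indicator A x \<partial>M)"
    by (intro nn_integral_cong) (simp split: split_indicator)
  finally show ?thesis by (simp add: ennreal_power)
qed

lemma integrable_cnj_mult_of_square_integrable:
  fixes f g :: "'a \<Rightarrow> complex"
  assumes [measurable]: "f \<in> borel_measurable M" "g \<in> borel_measurable M"
    and "(\<integral>\<^sup>+x. ennreal ((cmod (f x))\<^sup>2) \<partial>M) < \<infinity>" "(\<integral>\<^sup>+x. ennreal ((cmod (g x))\<^sup>2) \<partial>M) < \<infinity>"
  shows "integrable M (\<lambda>x. cnj (f x) * g x)"
proof -
  have "(\<integral>\<^sup>+x. ennreal (cmod (f x)) * ennreal (cmod (g x)) \<partial>M)\<^sup>2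
        \<le> (\<integral>\<^sup>+x. (ennreal (cmod (f x)))\<^sup>2 \<partial>M) * (\<integral>\<^sup>+x. (ennreal (cmod (g x)))\<^sup>2 \<partial>M)"
    by (rule Cauchy_Schwarz_nn_integral) auto
  also have "\<dots> < \<infinity>"
    using assms(3,4) by (simp add: ennreal_power ennreal_mult_less_top)
  finally show ?thesis
    by (simp add: integrable_iff_bounded norm_mult ennreal_mult power_less_top_ennreal)
qed

lemma set_nn_integral_restrict_space:
  assumes "\<Omega> \<inter> space M \<in> sets M" "A \<subseteq> \<Omega>"
  shows "(\<integral>\<^sup>+x\<in>A. f x \<partial>restrict_space M \<Omega>) = (\<integral>\<^sup>+x\<in>A. f x \<partial>M)"
  using assms by (subst nn_integral_restrict_space) (auto intro!: nn_integral_cong split: split_indicator)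

lemma set_nn_integral_one_minus_power2_finite:
  fixes \<psi> :: "'a \<Rightarrow> complex"
  assumes [measurable]: "\<psi> \<in> borel_measurable M" "\<omega> \<in> sets M"
    and "emeasure M \<omega> < \<infinity>" "(\<integral>\<^sup>+x. ennreal ((cmod (\<psi> x))\<^sup>2) \<partial>M) < \<infinity>"
  shows "(\<integral>\<^sup>+x\<in>\<omega>. ennreal ((cmod (1 - \<psi> x))\<^sup>2) \<partial>M) < \<infinity>"
proof -
  have "(\<integral>\<^sup>+x\<in>\<omega>. ennreal ((cmod (1 - \<psi> x))\<^sup>2) \<partial>M)
      \<le> (\<integral>\<^sup>+x. 2 * indicator \<omega> x + 2 * ennreal ((cmod (\<psi> x))\<^sup>2) \<partial>M)"
  proof (intro nn_integral_mono)
    fix x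
    have "ennreal ((cmod (1 - \<psi> x))\<^sup>2) \<le> ennreal (2 + 2 * (cmod (\<psi> x))\<^sup>2)"
      using norm_diff_power2_le[of 1 "\<psi> x"] by (intro ennreal_leI) simp
    then show "ennreal ((cmod (1 - \<psi> x))\<^sup>2) * indicator \<omega> x \<le> 2 * indicator \<omega> x + 2 * ennreal ((cmod (\<psi> x))\<^sup>2)"
      by (cases "x \<in> \<omega>") (auto simp: ennreal_mult add_increasing)
  qed
  also have "\<dots> = 2 * emeasure M \<omega> + 2 * (\<integral>\<^sup>+x. ennreal ((cmod (\<psi> x))\<^sup>2) \<partial>M)"
    by (simp add: nn_integral_add nn_integral_cmult)
  also have "\<dots> < \<infinity>"
    using assms(3,4) by (simp add: ennreal_mult_less_top)
  finally show ?thesis .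
qed

lemma le_ennreal_of_sqrt_enn2real_le:
  assumes "X < \<infinity>" "sqrt (enn2real X) \<le> q * sqrt m" "0 \<le> m"
  shows "X \<le> ennreal (q\<^sup>2 * m)"
proof -
  obtain x where x: "X = ennreal x" "0 \<le> x"
    using assms(1) by (cases X) auto
  have "(sqrt x)\<^sup>2 \<le> (q * sqrt m)\<^sup>2"
    using assms(2) x by (intro power_mono) auto
  then show ?thesis
    using x assms(3) by (simp add: power_mult_distrib)
qed

section \<open>Weights close to one\<close>

context
  fixes M :: "'a measure" and \<omega> :: "'a set" and \<psi> :: "'a \<Rightarrow> complex" and q :: real
  assumes \<omega>_sets[measurable]: "\<omega> \<in> sets M"
    and \<omega>_finite: "emeasure M \<omega> < \<infinity>"
    and \<psi>_measurable[measurable]: "\<psi> \<in> borel_measurable M"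
    and \<psi>_vanishes: "\<And>x. x \<in> space M \<Longrightarrow> x \<notin> \<omega> \<Longrightarrow> \<psi> x = 0"
    and q_nonneg: "0 \<le> q" and q_less_1: "q < 1"
    and \<psi>_close_to_1: "(\<integral>\<^sup>+x\<in>\<omega>. ennreal ((cmod (1 - \<psi> x))\<^sup>2) \<partial>M) \<le> ennreal (q\<^sup>2 * measure M \<omega>)"
begin

lemma emeasure_weight_support: "emeasure M \<omega> = ennreal (measure M \<omega>)"
  using \<omega>_finite by (simp add: emeasure_eq_ennreal_measure less_top)

lemma nn_integral_weight_sq_le: "(\<integral>\<^sup>+x. ennreal ((cmod (\<psi> x))\<^sup>2) \<partial>M) \<le> ennreal (4 * measure M \<omega>)"
proof -
  have "(\<integral>\<^sup>+x. ennreal ((cmod (\<psi> x))\<^sup>2) \<partial>M)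
        \<le> (\<integral>\<^sup>+x. 2 * indicator \<omega> x + 2 * (ennreal ((cmod (1 - \<psi> x))\<^sup>2) * indicator \<omega> x) \<partial>M)"
  proof (intro nn_integral_mono)
    fix x assume "x \<in> space M"
    have "ennreal ((cmod (\<psi> x))\<^sup>2) \<le> ennreal (2 + 2 * (cmod (1 - \<psi> x))\<^sup>2)"
      using norm_diff_power2_le[of 1 "1 - \<psi> x"] by (intro ennreal_leI) simp
    also have "\<dots> = 2 + 2 * ennreal ((cmod (1 - \<psi> x))\<^sup>2)"
      by (simp add: ennreal_mult)
    finally show "ennreal ((cmod (\<psi> x))\<^sup>2) \<le> 2 * indicator \<omega> x + 2 * (ennreal ((cmod (1 - \<psi> x))\<^sup>2) * indicator \<omega> x)"
      using \<psi>_vanishes[OF \<open>x \<in> space M\<close>] by (cases "x \<in> \<omega>") auto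
  qed
  also have "\<dots> = 2 * emeasure M \<omega> + 2 * (\<integral>\<^sup>+x\<in>\<omega>. ennreal ((cmod (1 - \<psi> x))\<^sup>2) \<partial>M)"
    by (simp add: nn_integral_add nn_integral_cmult)
  also have "\<dots> \<le> ennreal (2 * measure M \<omega> + 2 * (q\<^sup>2 * measure M \<omega>))"
    using \<psi>_close_to_1 by (simp add: emeasure_weight_support ennreal_mult add_mono mult_left_mono)
  also have "\<dots> \<le> ennreal (4 * measure M \<omega>)"
    using q_nonneg q_less_1 power_le_one[of q 2] by (intro ennreal_leI) (simp add: mult_left_le_one_le)
  finally show ?thesis .
qed

lemma integrable_weight: "integrable M \<psi>"
proof -
  have "(\<integral>\<^sup>+x. ennreal (norm (\<psi> x)) \<partial>M)\<^sup>2 \<le> (\<integral>\<^sup>+x. ennreal ((norm (\<psi> x))\<^sup>2) \<partial>M) * emeasure M \<omega>"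
    using \<psi>_vanishes by (intro Cauchy_Schwarz_nn_integral_support) auto
  also have "\<dots> < \<infinity>"
    using nn_integral_weight_sq_le \<omega>_finite by (simp add: ennreal_mult_less_top le_less_trans)
  finally show ?thesis by (simp add: integrable_iff_bounded power_less_top_ennreal)
qed

lemma norm_integral_weight_ge: "(1 - q) * measure M \<omega> \<le> cmod (integral\<^sup>L M \<psi>)"
proof -
  define m where "m = measure M \<omega>"
  define V where "V = (\<lambda>x. complex_of_real (indicator \<omega> x) - \<psi> x)"
  have indicator_int: "integrable M (\<lambda>x. complex_of_real (indicator \<omega> x))"
    using \<omega>_finite by (intro integrable_of_real integrable_real_indicator) auto
  then have V_int: "integrable M V"
    using integrable_weight by (simp add: V_def)
  have V_integral: "integral\<^sup>L M V = m - integral\<^sup>L M \<psi>"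
    unfolding V_def m_def using indicator_int integrable_weight by simp
  have "(ennreal (cmod (integral\<^sup>L M V)))\<^sup>2 \<le> (\<integral>\<^sup>+x. ennreal (cmod (V x)) \<partial>M)\<^sup>2"
    by (intro power_mono integral_norm_bound_ennreal V_int) auto
  also have "\<dots> \<le> (\<integral>\<^sup>+x. ennreal ((cmod (V x))\<^sup>2) \<partial>M) * emeasure M \<omega>"
    using V_int \<psi>_vanishes by (intro Cauchy_Schwarz_nn_integral_support) (auto simp: V_def)
  also have "(\<integral>\<^sup>+x. ennreal ((cmod (V x))\<^sup>2) \<partial>M) = (\<integral>\<^sup>+x\<in>\<omega>. ennreal ((cmod (1 - \<psi> x))\<^sup>2) \<partial>M)"
    using \<psi>_vanishes by (intro nn_integral_cong) (auto simp: V_def split: split_indicator)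
  also have "\<dots> * emeasure M \<omega> \<le> ennreal (q\<^sup>2 * m) * ennreal m"
    using \<psi>_close_to_1 by (simp add: m_def emeasure_weight_support mult_right_mono)
  also have "\<dots> = ennreal ((q * m)\<^sup>2)"
    using q_nonneg by (subst ennreal_mult[symmetric]) (auto simp: m_def power2_eq_square mult_ac)
  finally have "cmod (integral\<^sup>L M V) \<le> sqrt ((q * m)\<^sup>2)"
    by (rule ennreal_power2_le_imp_le_sqrt) auto
  also have "\<dots> = q * m"
    using q_nonneg by (simp add: m_def)
  finally show ?thesis
    using norm_triangle_ineq2[of "complex_of_real m" "integral\<^sup>L M \<psi>"] V_integral
    by (simp add: m_def algebra_simps)
qed

lemma norm_mult_integral_weight_le:
  fixes u :: "'a \<Rightarrow> complex" and c :: complex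
  assumes u_measurable[measurable]: "u \<in> borel_measurable M"
    and u\<psi>_integrable: "integrable M (\<lambda>y. cnj (u y) * \<psi> y)"
    and orthogonal: "(\<integral>y. cnj (u y) * \<psi> y \<partial>M) = 0"
  shows "(ennreal (cmod c * cmod (integral\<^sup>L M \<psi>)))\<^sup>2
         \<le> ennreal (4 * measure M \<omega>) * (\<integral>\<^sup>+y\<in>\<omega>. ennreal ((cmod (c - u y))\<^sup>2) \<partial>M)"
proof -
  have c\<psi>_integrable: "integrable M (\<lambda>y. cnj c * \<psi> y)"
    using integrable_weight by simp
  have "cnj c * integral\<^sup>L M \<psi> = (\<integral>y. (cnj c - cnj (u y)) * \<psi> y \<partial>M)"
    using c\<psi>_integrable u\<psi>_integrable orthogonal by (simp add: left_diff_distrib)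
  then have "cmod c * cmod (integral\<^sup>L M \<psi>) = cmod (\<integral>y. (cnj c - cnj (u y)) * \<psi> y \<partial>M)"
    by (metis complex_mod_cnj norm_mult)
  then have "(ennreal (cmod c * cmod (integral\<^sup>L M \<psi>)))\<^sup>2
        \<le> (\<integral>\<^sup>+y. ennreal (cmod ((cnj c - cnj (u y)) * \<psi> y)) \<partial>M)\<^sup>2"
    using c\<psi>_integrable u\<psi>_integrable
    by (simp only:) (intro power_mono integral_norm_bound_ennreal; simp add: left_diff_distrib)
  also have "(\<integral>\<^sup>+y. ennreal (cmod ((cnj c - cnj (u y)) * \<psi> y)) \<partial>M)
      = (\<integral>\<^sup>+y. (ennreal (cmod (c - u y)) * indicator \<omega> y) * ennreal (cmod (\<psi> y)) \<partial>M)"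
    using \<psi>_vanishes by (intro nn_integral_cong)
      (auto simp: norm_mult ennreal_mult split: split_indicator simp flip: complex_cnj_diff)
  also have "\<dots>\<^sup>2 \<le> (\<integral>\<^sup>+y. (ennreal (cmod (c - u y)) * indicator \<omega> y)\<^sup>2 \<partial>M)
                    * (\<integral>\<^sup>+y. (ennreal (cmod (\<psi> y)))\<^sup>2 \<partial>M)"
    by (rule Cauchy_Schwarz_nn_integral) auto
  also have "\<dots> \<le> (\<integral>\<^sup>+y\<in>\<omega>. ennreal ((cmod (c - u y))\<^sup>2) \<partial>M) * ennreal (4 * measure M \<omega>)"
  proof (rule mult_mono)
    show "(\<integral>\<^sup>+y. (ennreal (cmod (c - u y)) * indicator \<omega> y)\<^sup>2 \<partial>M)
        \<le> (\<integral>\<^sup>+y\<in>\<omega>. ennreal ((cmod (c - u y))\<^sup>2) \<partial>M)"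
      by (intro nn_integral_mono) (simp add: ennreal_power split: split_indicator)
    show "(\<integral>\<^sup>+y. (ennreal (cmod (\<psi> y)))\<^sup>2 \<partial>M) \<le> ennreal (4 * measure M \<omega>)"
      using nn_integral_weight_sq_le by (simp add: ennreal_power)
  qed auto
  finally show ?thesis
    by (simp add: mult.commute)
qed

lemma norm_power2_le_nn_integral_diff_power2:
  fixes u :: "'a \<Rightarrow> complex" and c :: complex
  assumes "u \<in> borel_measurable M" "integrable M (\<lambda>y. cnj (u y) * \<psi> y)"
    and "(\<integral>y. cnj (u y) * \<psi> y \<partial>M) = 0"
  shows "ennreal ((1 - q)\<^sup>2 * measure M \<omega> / 4 * (cmod c)\<^sup>2)
         \<le> (\<integral>\<^sup>+y\<in>\<omega>. ennreal ((cmod (c - u y))\<^sup>2) \<partial>M)"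
proof (cases "measure M \<omega> = 0")
  case False
  define m where "m = measure M \<omega>"
  have m_pos: "0 < m"
    using False by (simp add: m_def order_less_le)
  have "ennreal (4 * m) * ennreal ((1 - q)\<^sup>2 * m / 4 * (cmod c)\<^sup>2) = (ennreal (cmod c * ((1 - q) * m)))\<^sup>2"
    using q_less_1 m_pos by (simp add: ennreal_power ennreal_mult[symmetric] power2_eq_square mult_ac)
  also have "\<dots> \<le> (ennreal (cmod c * cmod (integral\<^sup>L M \<psi>)))\<^sup>2"
    using norm_integral_weight_ge q_less_1 m_pos
    by (intro power_mono ennreal_leI mult_left_mono) (auto simp: m_def)
  also have "\<dots> \<le> ennreal (4 * m) * (\<integral>\<^sup>+y\<in>\<omega>. ennreal ((cmod (c - u y))\<^sup>2) \<partial>M)"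
    unfolding m_def using assms by (rule norm_mult_integral_weight_le)
  finally show ?thesis
    using m_pos by (simp add: ennreal_mult_le_mult_iff m_def)
qed simp

end

lemma diff_power2_div_diameter_powr_le:
  fixes x y :: "'a::real_normed_vector" and u :: "'a \<Rightarrow> 'b::real_normed_vector"
  assumes "bounded P" "x \<in> P" "y \<in> P" "0 \<le> e"
  shows "(norm (u x - u y))\<^sup>2 / diameter P powr e \<le> (norm (u x - u y))\<^sup>2 / norm (x - y) powr e"
proof (cases "x = y")
  case False
  have le: "norm (x - y) powr e \<le> diameter P powr e"
    using diameter_bounded_bound[OF assms(1-3)] assms(4) by (intro powr_mono2) (auto simp: dist_norm)
  have pos: "0 < norm (x - y) powr e"
    using False by simp
  show ?thesis
    using le pos by (intro divide_left_mono mult_pos_pos) auto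
qed simp

lemma nn_integral_le_fractional_seminorm:
  fixes M :: "'a::real_normed_vector measure" and u :: "'a \<Rightarrow> complex"
  assumes [measurable]: "u \<in> borel_measurable M" "T \<in> sets M" "\<omega> \<in> sets M"
    and pointwise: "\<And>x. x \<in> T \<Longrightarrow>
      ennreal (a * (cmod (u x))\<^sup>2) \<le> (\<integral>\<^sup>+y\<in>\<omega>. ennreal ((cmod (u x - u y))\<^sup>2) \<partial>M)"
    and "0 \<le> a" "T \<subseteq> P" "\<omega> \<subseteq> P" "bounded P" "0 \<le> e"
  shows "ennreal (a / diameter P powr e) * (\<integral>\<^sup>+x\<in>T. ennreal ((cmod (u x))\<^sup>2) \<partial>M)
         \<le> (\<integral>\<^sup>+x\<in>P. (\<integral>\<^sup>+y\<in>P. ennreal ((cmod (u x - u y))\<^sup>2 / norm (x - y) powr e) \<partial>M) \<partial>M)"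
proof -
  define r where "r = 1 / diameter P powr e"
  have r_nonneg: "0 \<le> r"
    by (simp add: r_def)
  have "ennreal (a / diameter P powr e) * (\<integral>\<^sup>+x\<in>T. ennreal ((cmod (u x))\<^sup>2) \<partial>M)
      = (\<integral>\<^sup>+x\<in>T. ennreal r * ennreal (a * (cmod (u x))\<^sup>2) \<partial>M)"
    using \<open>0 \<le> a\<close> r_nonneg
    by (subst nn_integral_cmult[symmetric]) (auto simp: r_def ennreal_mult[symmetric] mult_ac)
  also have "\<dots> \<le> (\<integral>\<^sup>+x\<in>P. (\<integral>\<^sup>+y\<in>P. ennreal ((cmod (u x - u y))\<^sup>2 / norm (x - y) powr e) \<partial>M) \<partial>M)"
  proof (intro nn_integral_mono)
    fix x
    show "ennreal r * ennreal (a * (cmod (u x))\<^sup>2) * indicator T x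
      \<le> (\<integral>\<^sup>+y\<in>P. ennreal ((cmod (u x - u y))\<^sup>2 / norm (x - y) powr e) \<partial>M) * indicator P x"
    proof (cases "x \<in> T")
      case True
      have "ennreal r * ennreal (a * (cmod (u x))\<^sup>2)
          \<le> ennreal r * (\<integral>\<^sup>+y\<in>\<omega>. ennreal ((cmod (u x - u y))\<^sup>2) \<partial>M)"
        using pointwise[OF True] by (rule mult_left_mono) simp
      also have "\<dots> = (\<integral>\<^sup>+y\<in>\<omega>. ennreal (r * (cmod (u x - u y))\<^sup>2) \<partial>M)"
        using r_nonneg by (subst nn_integral_cmult[symmetric]) (auto simp: ennreal_mult mult_ac)
      also have "\<dots> \<le> (\<integral>\<^sup>+y\<in>P. ennreal ((cmod (u x - u y))\<^sup>2 / norm (x - y) powr e) \<partial>M)"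
        using True assms(6-9)
        by (intro nn_integral_mono)
          (auto simp: r_def split: split_indicator intro!: diff_power2_div_diameter_powr_le)
      finally show ?thesis
        using True \<open>T \<subseteq> P\<close> by auto
    qed simp
  qed
  finally show ?thesis .
qed

section \<open>Surface measure, element sizes and patches\<close>

lemma sets_surf[measurable_cong]: "sets (surf :: 'a::euclidean_space measure) = sets borel"
  unfolding surf_def hausdorff_measure_def using sets.sigma_sets_eq[of borel]
  by (simp add: sets_measure_of_conv)

lemma space_surf[simp]: "space (surf :: 'a::euclidean_space measure) = UNIV"
  using sets_eq_imp_space_eq[OF sets_surf] by simp

lemma emeasure_surf_singleton:
  assumes "DIM('a) \<ge> 2"
  shows "emeasure (surf :: 'a::euclidean_space measure) {x} = 0"
proof -
  define s where "s = real (DIM('a) - 1)"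
  have "hausdorff_content s \<delta> {x} = 0" if "0 < \<delta>" for \<delta>
  proof -
    define E where "E = (\<lambda>i::nat. if i = 0 then {x} else ({}::'a set))"
    have "hausdorff_content s \<delta> {x} \<le> (\<Sum>i. ennreal (hausdorff_const s * (diameter (E i) / 2) powr s))"
      unfolding hausdorff_content_def using that by (intro INF_lower) (auto simp: E_def)
    also have "(\<lambda>i. ennreal (hausdorff_const s * (diameter (E i) / 2) powr s)) = (\<lambda>i. 0)"
      using assms by (simp add: E_def s_def fun_eq_iff)
    finally show ?thesis
      by simp
  qed
  then have "hausdorff_outer s {x} = 0"
    by (simp add: hausdorff_outer_def)
  then show ?thesis
    by (simp add: surf_def hausdorff_measure_def emeasure_measure_of_conv s_def)
qed

lemma measure_surf_eq_0_of_diameter_eq_0: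
  fixes T :: "'a::euclidean_space set"
  assumes "DIM('a) \<ge> 2" "bounded T" "diameter T = 0"
  shows "measure surf T = 0"
proof (cases "T = {}")
  case False
  then obtain x where x: "x \<in> T"
    by auto
  have "T \<subseteq> {x}"
    using diameter_bounded_bound[OF assms(2) x] assms(3) by auto
  then have "emeasure surf T = 0"
    using emeasure_mono[of T "{x}" surf] emeasure_surf_singleton[OF assms(1)] by (simp add: sets_surf)
  then show ?thesis
    by (simp add: measure_def)
qed simp

lemma elsize_pos_iff: "0 < elsize T \<longleftrightarrow> 0 < measure surf T"
  by (simp add: elsize_def order_less_le)

lemma elsize_powr_dim:
  assumes "DIM('a) \<ge> 2"
  shows "elsize (T :: 'a::euclidean_space set) powr real (DIM('a) - 1) = measure surf T"
  using assms by (simp add: elsize_def powr_powr)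

lemma L2_on_restrict_space:
  fixes \<Gamma> :: "'a::euclidean_space set"
  assumes "L2_on \<Gamma> f" "\<Gamma> \<in> sets borel"
  shows "f \<in> borel_measurable (restrict_space surf \<Gamma>)"
    and "(\<integral>\<^sup>+x. ennreal ((cmod (f x))\<^sup>2) \<partial>restrict_space surf \<Gamma>) < \<infinity>"
  using assms
  by (simp_all add: L2_on_def set_borel_measurable_def borel_measurable_restrict_space_iff
      nn_integral_restrict_space sets_surf)

lemma Hs_semi_sq_mono: "A \<subseteq> B \<Longrightarrow> Hs_semi_sq D \<sigma> A v \<le> Hs_semi_sq D \<sigma> B v"
  unfolding Hs_semi_sq_def
  by (intro sum_mono nn_integral_mono mult_mono) (auto split: split_indicator)

lemma patch_subset_Union: "T \<in> \<T> \<Longrightarrow> patch \<T> k T \<subseteq> \<Union>\<T>"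
  by (cases k) auto

lemma subset_patch: "T \<in> \<T> \<Longrightarrow> T \<subseteq> patch \<T> k T"
  by (induction k) auto

lemma mesh_M2_neighbour_diameter_le:
  assumes "mesh_M2 \<T> Cl" "T \<in> \<T>" "T' \<in> \<T>" "T \<inter> T' \<noteq> {}" "0 < diameter T"
  shows "diameter T' \<le> max 1 Cl * diameter T"
proof -
  have "T \<in> patch_elems \<T> 1 T'"
    using assms(2-4) by (auto simp: patch_elems_def)
  then have "diameter T' \<le> Cl * diameter T"
    using assms(1,3,5) by (auto simp: mesh_M2_def divide_le_eq)
  also have "\<dots> \<le> max 1 Cl * diameter T"
    using assms(5) by (intro mult_right_mono) auto
  finally show ?thesis .
qed

lemma patch_subset_cball:
  assumes bounded: "\<forall>T'\<in>\<T>. bounded T'" and M2: "mesh_M2 \<T> Cl"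
    and pos: "\<forall>T'\<in>\<T>. 0 < diameter T'" and T: "T \<in> \<T>" and x0: "x0 \<in> T"
  shows "patch \<T> k T \<subseteq> cball x0 ((real k + 1) * max 1 Cl ^ k * diameter T)
    \<and> (\<forall>T'\<in>\<T>. T' \<inter> patch \<T> k T \<noteq> {} \<longrightarrow> diameter T' \<le> max 1 Cl ^ Suc k * diameter T)"
proof (induction k)
  case 0
  have "diameter T' \<le> max 1 Cl * diameter T" if "T' \<in> \<T>" "T' \<inter> T \<noteq> {}" for T'
    using mesh_M2_neighbour_diameter_le[OF M2 T that(1)] that(2) pos T by blast
  then show ?case
    using diameter_bounded_bound[of T x0] bounded T x0 by auto
next
  case (Suc k)
  define L where "L = max 1 Cl"
  have L: "1 \<le> L"
    by (simp add: L_def)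
  have "patch \<T> (Suc k) T \<subseteq> cball x0 ((real (Suc k) + 1) * L ^ Suc k * diameter T)"
  proof
    fix y assume "y \<in> patch \<T> (Suc k) T"
    then obtain T' z where T': "T' \<in> \<T>" "y \<in> T'" "z \<in> T'" "z \<in> patch \<T> k T"
      by auto
    have "dist x0 y \<le> dist x0 z + dist z y"
      by (rule dist_triangle)
    also have "\<dots> \<le> (real k + 1) * L ^ k * diameter T + L ^ Suc k * diameter T"
      using Suc.IH T' bounded diameter_bounded_bound[of T' z y] by (intro add_mono) (auto simp: L_def)
    also have "\<dots> \<le> (real k + 1) * L ^ Suc k * diameter T + L ^ Suc k * diameter T"
      using L pos T by (intro add_mono mult_right_mono mult_left_mono power_increasing) auto
    finally show "y \<in> cball x0 ((real (Suc k) + 1) * L ^ Suc k * diameter T)"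
      by (simp add: algebra_simps)
  qed
  moreover have "\<forall>T''\<in>\<T>. T'' \<inter> patch \<T> (Suc k) T \<noteq> {} \<longrightarrow> diameter T'' \<le> L ^ Suc (Suc k) * diameter T"
  proof (intro ballI impI)
    fix T'' assume T'': "T'' \<in> \<T>" "T'' \<inter> patch \<T> (Suc k) T \<noteq> {}"
    obtain T' where T': "T' \<in> \<T>" "T' \<inter> patch \<T> k T \<noteq> {}" "T' \<inter> T'' \<noteq> {}"
      using T'' by auto
    have "diameter T'' \<le> L * diameter T'"
      using M2 T' T'' pos by (simp add: mesh_M2_neighbour_diameter_le L_def)
    also have "\<dots> \<le> L * (L ^ Suc k * diameter T)"
      using Suc.IH T' L by (intro mult_left_mono) (auto simp: L_def)
    finally show "diameter T'' \<le> L ^ Suc (Suc k) * diameter T"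
      by simp
  qed
  ultimately show ?case
    by (simp only: L_def)
qed

lemma patch_bounded_diameter_le:
  assumes "\<forall>T'\<in>\<T>. bounded T'" "mesh_M2 \<T> Cl" "\<forall>T'\<in>\<T>. 0 < diameter T'" "T \<in> \<T>"
  shows "bounded (patch \<T> k T)"
    and "diameter (patch \<T> k T) \<le> 2 * (real k + 1) * max 1 Cl ^ k * diameter T"
proof -
  obtain x0 where x0: "x0 \<in> T"
    using assms(3,4) by force
  define r where "r = (real k + 1) * max 1 Cl ^ k * diameter T"
  have r: "0 \<le> r"
    using assms(3,4) unfolding r_def by (intro mult_nonneg_nonneg) (auto intro: less_imp_le)
  have sub: "patch \<T> k T \<subseteq> cball x0 r"
    using patch_subset_cball[OF assms x0] by (simp add: r_def)
  then show "bounded (patch \<T> k T)"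
    using bounded_subset[OF bounded_cball] by blast
  have "diameter (patch \<T> k T) \<le> 2 * r"
    using diameter_subset[OF sub] r by simp
  also have "2 * r = 2 * (real k + 1) * max 1 Cl ^ k * diameter T"
    by (simp add: r_def)
  finally show "diameter (patch \<T> k T) \<le> 2 * (real k + 1) * max 1 Cl ^ k * diameter T" .
qed

lemma mesh_M3_const_pos:
  fixes \<T> :: "'a::euclidean_space set set"
  assumes "DIM('a) \<ge> 2" "mesh_M3 \<T> Cs" "T \<in> \<T>" "bounded T" "0 < elsize T"
  shows "0 < Cs"
proof (rule ccontr)
  assume "\<not> 0 < Cs"
  moreover have "0 \<le> diameter T / elsize T"
    using assms(4,5) by (simp add: diameter_ge_0)
  moreover have "diameter T / elsize T \<le> Cs"
    using assms(2,3) by (simp add: mesh_M3_def)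
  ultimately have "diameter T / elsize T = 0"
    by linarith
  then have "measure surf T = 0"
    using assms by (intro measure_surf_eq_0_of_diameter_eq_0) auto
  then show False
    using assms(5) by (simp add: elsize_pos_iff)
qed

lemma mesh_M3_pos:
  assumes "mesh_M3 \<T> Cs" "0 < Cs" "T \<in> \<T>" "bounded T"
  shows "0 < diameter T" "0 < elsize T"
proof -
  have "0 < diameter T / elsize T"
    using assms(1-3) by (force simp: mesh_M3_def intro: less_le_trans[of 0 "1 / Cs"])
  moreover have "0 \<le> diameter T" "0 \<le> elsize T"
    using assms(4) by (simp_all add: diameter_ge_0 elsize_def)
  ultimately show "0 < diameter T" "0 < elsize T"
    by (auto simp: zero_less_divide_iff)
qed

lemma patch_diameter_bounds:
  assumes bounded: "\<forall>T'\<in>\<T>. bounded T'" and M2: "mesh_M2 \<T> Cl" and M3: "mesh_M3 \<T> Cs"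
    and pos: "\<forall>T'\<in>\<T>. 0 < diameter T'" and T: "T \<in> \<T>" and h: "0 < elsize T"
    and K: "2 * (real k + 1) * max 1 Cl ^ k * Cs \<le> K"
  shows "diameter T \<le> diameter (patch \<T> k T)" and "diameter (patch \<T> k T) \<le> K * elsize T"
proof -
  show "diameter T \<le> diameter (patch \<T> k T)"
    using subset_patch[OF T] patch_bounded_diameter_le(1)[OF bounded M2 pos T] by (rule diameter_subset)
  have "diameter T \<le> Cs * elsize T"
    using M3 T h by (auto simp: mesh_M3_def divide_le_eq)
  then have "diameter (patch \<T> k T) \<le> 2 * (real k + 1) * max 1 Cl ^ k * (Cs * elsize T)"
    using patch_bounded_diameter_le(2)[OF bounded M2 pos T, of k]
    by (auto intro: order_trans mult_left_mono)
  also have "\<dots> \<le> K * elsize T"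
    using K h by (simp add: mult.assoc[symmetric] mult_right_mono)
  finally show "diameter (patch \<T> k T) \<le> K * elsize T" .
qed

lemma emeasure_surf_Union_finite:
  fixes \<T> :: "'a::euclidean_space set set"
  assumes "finite \<T>" "\<forall>T'\<in>\<T>. compact T'" "\<forall>T'\<in>\<T>. 0 < measure surf T'"
  shows "emeasure surf (\<Union>\<T>) < \<infinity>"
proof -
  have "\<T> \<subseteq> sets surf"
    using assms(2) by (auto simp: sets_surf intro: borel_closed compact_imp_closed)
  then have "emeasure surf (\<Union>\<T>) \<le> (\<Sum>T'\<in>\<T>. emeasure surf T')"
    using emeasure_subadditive_finite[of \<T> "\<lambda>T'. T'" surf] assms(1) by simp
  also have "\<dots> < \<infinity>"
    using assms(1,3) by (auto simp: measure_def less_top[symmetric])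
  finally show ?thesis .
qed

section \<open>The local estimate\<close>

lemma vsupp_eq_csupp:
  assumes "j \<in> {1..D}" "\<forall>j'\<in>{1..D}. j' \<noteq> j \<longrightarrow> (\<forall>x\<in>\<Gamma>. f x j' = 0)"
  shows "vsupp D \<Gamma> f = csupp \<Gamma> (\<lambda>x. f x j)"
proof -
  have "{x \<in> \<Gamma>. \<exists>j'\<in>{1..D}. f x j' \<noteq> 0} = {x \<in> \<Gamma>. f x j \<noteq> 0}"
    using assms by (safe; force)
  then show ?thesis
    by (simp add: vsupp_def csupp_def)
qed

lemma S4_weight:
  fixes \<Gamma> :: "'a::euclidean_space set"
  assumes S4: "S4 D \<Gamma> \<T> qsupp q \<Psi>" and T: "T \<in> \<T>" and j: "j \<in> {1..D}"
    and \<Gamma>_closed: "closed \<Gamma>" and \<Gamma>_finite: "emeasure surf \<Gamma> < \<infinity>"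
  defines "\<omega> \<equiv> csupp \<Gamma> (\<lambda>x. \<Psi> T j x j)" and "R \<equiv> restrict_space surf \<Gamma>"
  shows "T \<subseteq> \<omega>" and "\<omega> \<subseteq> patch \<T> qsupp T" and "\<omega> \<subseteq> \<Gamma>" and "\<omega> \<in> sets R"
    and "emeasure R \<omega> < \<infinity>" and "(\<lambda>x. \<Psi> T j x j) \<in> borel_measurable R"
    and "(\<integral>\<^sup>+x. ennreal ((cmod (\<Psi> T j x j))\<^sup>2) \<partial>R) < \<infinity>"
    and "\<And>x. x \<in> space R \<Longrightarrow> x \<notin> \<omega> \<Longrightarrow> \<Psi> T j x j = 0"
    and "(\<integral>\<^sup>+x\<in>\<omega>. ennreal ((cmod (1 - \<Psi> T j x j))\<^sup>2) \<partial>R) \<le> ennreal (q\<^sup>2 * measure R \<omega>)"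
proof -
  have \<Gamma>_sets: "\<Gamma> \<in> sets surf"
    using \<Gamma>_closed by (simp add: sets_surf)
  have S4T: "(\<forall>j'\<in>{1..D}. L2_on \<Gamma> (\<lambda>x. \<Psi> T j x j')) \<and>
      T \<subseteq> vsupp D \<Gamma> (\<Psi> T j) \<and> vsupp D \<Gamma> (\<Psi> T j) \<subseteq> patch \<T> qsupp T \<and>
      (\<forall>j'\<in>{1..D}. j' \<noteq> j \<longrightarrow> (\<forall>x\<in>\<Gamma>. \<Psi> T j x j' = 0)) \<and>
      sqrt (enn2real (\<integral>\<^sup>+x\<in>vsupp D \<Gamma> (\<Psi> T j). ennreal ((cmod (1 - \<Psi> T j x j))\<^sup>2) \<partial>surf))
        \<le> q * sqrt (measure surf (csupp \<Gamma> (\<lambda>x. \<Psi> T j x j)))"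
    using S4 T j unfolding S4_def by blast
  then have vsupp: "vsupp D \<Gamma> (\<Psi> T j) = \<omega>"
    using j by (simp add: vsupp_eq_csupp \<omega>_def)
  show "T \<subseteq> \<omega>" "\<omega> \<subseteq> patch \<T> qsupp T"
    using S4T vsupp by auto
  show \<omega>_\<Gamma>: "\<omega> \<subseteq> \<Gamma>"
    unfolding \<omega>_def csupp_def using \<Gamma>_closed by (intro closure_minimal) auto
  show \<omega>_sets: "\<omega> \<in> sets R"
    using \<omega>_\<Gamma> \<Gamma>_sets by (auto simp: R_def sets_restrict_space_iff \<omega>_def csupp_def sets_surf)
  show \<omega>_finite: "emeasure R \<omega> < \<infinity>"
    using \<omega>_\<Gamma> \<Gamma>_sets \<Gamma>_finite emeasure_mono[OF \<omega>_\<Gamma> \<Gamma>_sets]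
    by (simp add: R_def emeasure_restrict_space)
  show \<psi>_measurable: "(\<lambda>x. \<Psi> T j x j) \<in> borel_measurable R"
    and \<psi>_L2: "(\<integral>\<^sup>+x. ennreal ((cmod (\<Psi> T j x j))\<^sup>2) \<partial>R) < \<infinity>"
    using L2_on_restrict_space[of \<Gamma> "\<lambda>x. \<Psi> T j x j"] S4T j \<Gamma>_sets by (simp_all add: R_def sets_surf)
  show "\<And>x. x \<in> space R \<Longrightarrow> x \<notin> \<omega> \<Longrightarrow> \<Psi> T j x j = 0"
    using closure_subset[of "{x \<in> \<Gamma>. \<Psi> T j x j \<noteq> 0}"]
    by (auto simp: R_def space_restrict_space \<omega>_def csupp_def)
  have "(\<integral>\<^sup>+x\<in>\<omega>. ennreal ((cmod (1 - \<Psi> T j x j))\<^sup>2) \<partial>R) < \<infinity>"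
    using \<psi>_measurable \<omega>_sets \<omega>_finite \<psi>_L2 by (rule set_nn_integral_one_minus_power2_finite)
  moreover have "sqrt (enn2real (\<integral>\<^sup>+x\<in>\<omega>. ennreal ((cmod (1 - \<Psi> T j x j))\<^sup>2) \<partial>R))
      \<le> q * sqrt (measure R \<omega>)"
    using S4T \<omega>_\<Gamma> \<Gamma>_sets
    by (simp add: vsupp R_def set_nn_integral_restrict_space measure_restrict_space \<omega>_def)
  ultimately show "(\<integral>\<^sup>+x\<in>\<omega>. ennreal ((cmod (1 - \<Psi> T j x j))\<^sup>2) \<partial>R) \<le> ennreal (q\<^sup>2 * measure R \<omega>)"
    by (rule le_ennreal_of_sqrt_enn2real_le[OF _ _ measure_nonneg])
qed

lemma S4_component_le_fractional_seminorm:
  fixes \<Gamma> :: "'a::euclidean_space set" and v :: "'a \<Rightarrow> nat \<Rightarrow> complex"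
  assumes S4: "S4 D \<Gamma> \<T> qsupp q \<Psi>" and T: "T \<in> \<T>" "T \<in> sets borel" and j: "j \<in> {1..D}"
    and \<Gamma>: "closed \<Gamma>" "emeasure surf \<Gamma> < \<infinity>"
    and P: "patch \<T> qsupp T \<subseteq> \<Gamma>" "bounded (patch \<T> qsupp T)"
    and v_L2: "L2_on \<Gamma> (\<lambda>x. v x j)"
    and orthogonal: "(\<integral>x\<in>\<Gamma>. cnj (v x j) * \<Psi> T j x j \<partial>surf) = 0"
    and "0 \<le> e"
  shows "ennreal ((1 - q)\<^sup>2 * measure surf T / 4 / diameter (patch \<T> qsupp T) powr e)
           * (\<integral>\<^sup>+x\<in>T. ennreal ((cmod (v x j))\<^sup>2) \<partial>surf)
         \<le> (\<integral>\<^sup>+x\<in>patch \<T> qsupp T. (\<integral>\<^sup>+y\<in>patch \<T> qsupp T.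
              ennreal ((cmod (v x j - v y j))\<^sup>2 / norm (x - y) powr e) \<partial>surf) \<partial>surf)"
proof -
  define P where "P = patch \<T> qsupp T"
  define u where "u = (\<lambda>x. v x j)"
  define \<psi> where "\<psi> = (\<lambda>x. \<Psi> T j x j)"
  define \<omega> where "\<omega> = csupp \<Gamma> \<psi>"
  define R where "R = restrict_space surf \<Gamma>"
  define a where "a = (1 - q)\<^sup>2 * measure surf T / 4"
  note weight = S4_weight[OF S4 T(1) j \<Gamma>, folded \<psi>_def \<omega>_def R_def]
  have q: "0 < q" "q < 1"
    using S4 by (simp_all add: S4_def)
  have \<Gamma>_sets: "\<Gamma> \<inter> space surf \<in> sets surf"
    using \<Gamma>(1) by (simp add: sets_surf)
  have u_measurable: "u \<in> borel_measurable R" and u_L2: "(\<integral>\<^sup>+x. ennreal ((cmod (u x))\<^sup>2) \<partial>R) < \<infinity>"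
    using L2_on_restrict_space[OF v_L2] \<Gamma>(1) by (simp_all add: u_def R_def)
  have orthogonal_R: "(\<integral>y. cnj (u y) * \<psi> y \<partial>R) = 0"
    using orthogonal \<Gamma>_sets by (simp add: R_def u_def \<psi>_def integral_restrict_space set_lebesgue_integral_def)
  have T_le_\<omega>: "measure surf T \<le> measure R \<omega>"
  proof -
    have "measure surf T \<le> measure surf \<omega>"
      using weight(1,3,4,5) T(2) \<Gamma>_sets
      by (intro measure_mono_fmeasurable)
        (auto simp: R_def sets_surf sets_restrict_space_iff fmeasurable_def emeasure_restrict_space)
    then show ?thesis
      using weight(3) \<Gamma>_sets by (simp add: R_def measure_restrict_space)
  qed
  have pointwise: "ennreal (a * (cmod (u x))\<^sup>2) \<le> (\<integral>\<^sup>+y\<in>\<omega>. ennreal ((cmod (u x - u y))\<^sup>2) \<partial>R)" for x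
  proof -
    have "ennreal (a * (cmod (u x))\<^sup>2) \<le> ennreal ((1 - q)\<^sup>2 * measure R \<omega> / 4 * (cmod (u x))\<^sup>2)"
      using T_le_\<omega> unfolding a_def
      by (intro ennreal_leI mult_right_mono divide_right_mono mult_left_mono) auto
    also have "\<dots> \<le> (\<integral>\<^sup>+y\<in>\<omega>. ennreal ((cmod (u x - u y))\<^sup>2) \<partial>R)"
      using weight q u_measurable u_L2 orthogonal_R
      by (intro norm_power2_le_nn_integral_diff_power2 integrable_cnj_mult_of_square_integrable)
        (auto simp: \<psi>_def)
    finally show ?thesis .
  qed
  have "ennreal (a / diameter P powr e) * (\<integral>\<^sup>+x\<in>T. ennreal ((cmod (u x))\<^sup>2) \<partial>R)
      \<le> (\<integral>\<^sup>+x\<in>P. (\<integral>\<^sup>+y\<in>P. ennreal ((cmod (u x - u y))\<^sup>2 / norm (x - y) powr e) \<partial>R) \<partial>R)"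
    using weight u_measurable pointwise T(2) P \<open>0 \<le> e\<close> \<Gamma>_sets
    by (intro nn_integral_le_fractional_seminorm)
      (auto simp: a_def P_def R_def sets_restrict_space_iff sets_surf)
  also have "\<dots> = (\<integral>\<^sup>+x\<in>P. (\<integral>\<^sup>+y\<in>P. ennreal ((cmod (u x - u y))\<^sup>2 / norm (x - y) powr e) \<partial>surf) \<partial>surf)"
    using P(1) \<Gamma>_sets by (simp add: P_def R_def set_nn_integral_restrict_space)
  finally show ?thesis
    using weight(1,3) \<Gamma>_sets by (simp add: a_def P_def u_def R_def set_nn_integral_restrict_space)
qed

lemma L2_norm_sq_le_Hs_semi_sq_patch:
  fixes \<Gamma> :: "'a::euclidean_space set"
  assumes "S4 D \<Gamma> \<T> qsupp q \<Psi>" "T \<in> \<T>" "T \<in> sets borel" "closed \<Gamma>" "emeasure surf \<Gamma> < \<infinity>"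
    and "patch \<T> qsupp T \<subseteq> \<Gamma>" "bounded (patch \<T> qsupp T)" "in_Hs D \<sigma> \<Gamma> v"
    and "\<forall>j\<in>{1..D}. (\<integral>x\<in>\<Gamma>. cnj (v x j) * \<Psi> T j x j \<partial>surf) = 0" "0 \<le> \<sigma>"
  shows "ennreal ((1 - q)\<^sup>2 * measure surf T / 4
           / diameter (patch \<T> qsupp T) powr (real (DIM('a) - 1) + 2 * \<sigma>)) * L2_norm_sq D T v
         \<le> Hs_semi_sq D \<sigma> (patch \<T> qsupp T) v"
  unfolding L2_norm_sq_def Hs_semi_sq_def sum_distrib_left
  using assms by (intro sum_mono S4_component_le_fractional_seminorm) (auto simp: in_Hs_def)

lemma elsize_weighted_L2_norm_le_Hs_seminorm_patch:
  fixes \<T> :: "'a::euclidean_space set set"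
  assumes dim: "DIM('a) \<ge> 2"
    and finite: "finite \<T>" and compact: "\<forall>T'\<in>\<T>. compact T'"
    and M2: "mesh_M2 \<T> Cl" and M3: "mesh_M3 \<T> Cs"
    and S4: "S4 D (\<Union>\<T>) \<T> qsupp q \<Psi>" and T: "T \<in> \<T>"
    and v: "in_Hs D \<sigma> (\<Union>\<T>) v"
    and orthogonal: "\<forall>j\<in>{1..D}. (\<integral>x\<in>\<Union>\<T>. cnj (v x j) * \<Psi> T j x j \<partial>surf) = 0"
    and \<sigma>: "0 \<le> \<sigma>" and h: "0 < elsize T"
    and K: "2 * (real qsupp + 1) * max 1 Cl ^ qsupp * Cs \<le> K"
  shows "elsize T powr (- \<sigma>) * sqrt (enn2real (L2_norm_sq D T v))
         \<le> 2 * K powr ((real (DIM('a) - 1) + 2 * \<sigma>) / 2) / (1 - q)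
           * sqrt (enn2real (Hs_semi_sq D \<sigma> (patch \<T> qsupp T) v))"
proof -
  define P where "P = patch \<T> qsupp T"
  define e where "e = real (DIM('a) - 1) + 2 * \<sigma>"
  define C where "C = 2 * K powr (e / 2) / (1 - q)"
  have bounded: "\<forall>T'\<in>\<T>. bounded T'"
    using compact by (simp add: compact_imp_bounded)
  have Cs: "0 < Cs"
    using mesh_M3_const_pos[OF dim M3 T] bounded T h by blast
  have pos: "\<forall>T'\<in>\<T>. 0 < diameter T'" "\<forall>T'\<in>\<T>. 0 < measure surf T'"
    using mesh_M3_pos[OF M3 Cs] bounded by (auto simp: elsize_pos_iff)
  have q: "0 < q" "q < 1"
    using S4 by (simp_all add: S4_def)
  note diameter_P = patch_diameter_bounds[OF bounded M2 M3 pos(1) T h K, folded P_def]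
  have "0 < K * elsize T"
    using diameter_P pos(1) T by (meson order_less_le_trans)
  then have "0 < C"
    using h q by (simp add: C_def zero_less_mult_iff)
  have "(elsize T powr (- \<sigma>) / C)\<^sup>2 \<le> (1 - q)\<^sup>2 * elsize T powr real (DIM('a) - 1) / 4 / diameter P powr e"
    unfolding C_def e_def using diameter_P pos(1) T h \<sigma> q by (intro scaling_constant_le) auto
  then have "(elsize T powr (- \<sigma>) / C)\<^sup>2 \<le> (1 - q)\<^sup>2 * measure surf T / 4 / diameter P powr e"
    by (simp only: elsize_powr_dim[OF dim])
  then have "ennreal ((elsize T powr (- \<sigma>) / C)\<^sup>2) * L2_norm_sq D T v
      \<le> ennreal ((1 - q)\<^sup>2 * measure surf T / 4 / diameter P powr e) * L2_norm_sq D T v"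
    by (intro mult_right_mono ennreal_leI) auto
  also have "\<dots> \<le> Hs_semi_sq D \<sigma> P v"
    unfolding P_def e_def
  proof (rule L2_norm_sq_le_Hs_semi_sq_patch[OF S4 T _ _ _ patch_subset_Union[OF T] _ v orthogonal \<sigma>])
    show "T \<in> sets borel"
      using compact T by (simp add: compact_imp_closed)
    show "closed (\<Union>\<T>)"
      using finite compact by (intro compact_imp_closed compact_Union) auto
    show "emeasure surf (\<Union>\<T>) < \<infinity>"
      using finite compact pos(2) by (rule emeasure_surf_Union_finite)
    show "bounded (patch \<T> qsupp T)"
      by (rule patch_bounded_diameter_le(1)[OF bounded M2 pos(1) T])
  qed
  finally have L2_le: "ennreal ((elsize T powr (- \<sigma>) / C)\<^sup>2) * L2_norm_sq D T v \<le> Hs_semi_sq D \<sigma> P v" .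
  have Hs_finite: "Hs_semi_sq D \<sigma> P v < \<infinity>"
    using Hs_semi_sq_mono[OF patch_subset_Union[OF T], of D \<sigma> qsupp v] v
    by (simp add: P_def in_Hs_def le_less_trans)
  have "elsize T powr (- \<sigma>) / C * sqrt (enn2real (L2_norm_sq D T v)) \<le> sqrt (enn2real (Hs_semi_sq D \<sigma> P v))"
    using L2_le Hs_finite \<open>0 < C\<close> by (intro mult_sqrt_enn2real_le) auto
  then show ?thesis
    unfolding e_def[symmetric] C_def[symmetric] P_def[symmetric] using \<open>0 < C\<close>
    by (simp add: pos_divide_le_eq mult.commute)
qed

lemma elsize_weighted_L2_norm_le_Hs_seminorm_patch_mesh:
  fixes \<Gamma> :: "'a::euclidean_space set" and param :: "'b::euclidean_space itself"
  assumes dim: "DIM('a) \<ge> 2" and mesh: "mesh param \<Gamma> \<T>"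
    and M2: "mesh_M2 \<T> Cl" and M3: "mesh_M3 \<T> Cs"
    and S4: "S4 D \<Gamma> \<T> qsupp q \<Psi>" and T: "T \<in> \<T>" and v: "in_Hs D \<sigma> \<Gamma> v"
    and orthogonal: "\<forall>j\<in>{1..D}. (\<integral>x\<in>\<Gamma>. cnj (v x j) * \<Psi> T j x j \<partial>surf) = 0"
    and \<sigma>: "0 \<le> \<sigma>" and K: "2 * (real qsupp + 1) * max 1 Cl ^ qsupp * Cs \<le> K"
  shows "elsize T powr (- \<sigma>) * sqrt (enn2real (L2_norm_sq D T v))
         \<le> 2 * K powr ((real (DIM('a) - 1) + 2 * \<sigma>) / 2) / (1 - q)
           * sqrt (enn2real (Hs_semi_sq D \<sigma> (patch \<T> qsupp T) v))"
proof (cases "elsize T = 0")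
  case True
  have "q < 1"
    using S4 by (simp add: S4_def)
  with True show ?thesis
    by simp
next
  case False
  then have "0 < elsize T"
    by (simp add: elsize_def order_less_le)
  moreover have "\<Gamma> = \<Union>\<T>" "finite \<T>" "\<forall>T'\<in>\<T>. compact T'"
    using mesh by (auto simp: mesh_def)
  ultimately show ?thesis
    using elsize_weighted_L2_norm_le_Hs_seminorm_patch[OF dim _ _ M2 M3 _ T _ _ \<sigma> _ K] S4 v orthogonal
    by simp
qed

theorem lemma4p7:
  fixes \<Omega> :: "'a::euclidean_space set"
    and param :: "'b::euclidean_space itself"
    and \<sigma> Cpatch Clocuni Cshape qunity :: real
    and qsupp :: nat
  assumes "DIM('a) \<ge> 2" and "DIM('b) + 1 = DIM('a)"
    and "lipschitz_domain \<Omega>"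
    and "0 < \<sigma>" and "\<sigma> < 1"
  shows "\<exists>C>0. \<forall>(D::nat) (\<T>::'a set set) \<Psi> T (v::'a \<Rightarrow> nat \<Rightarrow> complex).
           D \<ge> 1 \<and> mesh param (frontier \<Omega>) \<T> \<and>
           mesh_M1 \<T> Cpatch \<and> mesh_M2 \<T> Clocuni \<and> mesh_M3 \<T> Cshape \<and>
           S4 D (frontier \<Omega>) \<T> qsupp qunity \<Psi> \<and> T \<in> \<T> \<and>
           in_Hs D \<sigma> (frontier \<Omega>) v \<and>
           (\<forall>j\<in>{1..D}. (\<integral>x\<in>frontier \<Omega>. cnj (v x j) * \<Psi> T j x j \<partial>surf) = 0)
           \<longrightarrow> elsize T powr (- \<sigma>) * sqrt (enn2real (L2_norm_sq D T v))
               \<le> C * sqrt (enn2real (Hs_semi_sq D \<sigma> (patch \<T> qsupp T) v))"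
proof (cases "0 < qunity \<and> qunity < 1")
  case False
  then show ?thesis
    by (intro exI[of _ 1]) (auto simp: S4_def)
next
  case True
  \<comment> \<open>\<open>max 1\<close> only keeps \<open>C\<close> positive for degenerate \<open>Cshape \<le> 0\<close>\<close>
  define K where "K = max 1 (2 * (real qsupp + 1) * max 1 Clocuni ^ qsupp * Cshape)"
  define C where "C = 2 * K powr ((real (DIM('a) - 1) + 2 * \<sigma>) / 2) / (1 - qunity)"
  have "0 < C"
    using True by (simp add: C_def K_def)
  then show ?thesis
    using assms(1,4)
    by (intro exI[of _ C] conjI allI impI \<open>0 < C\<close>, unfold C_def,
        intro elsize_weighted_L2_norm_le_Hs_seminorm_patch_mesh) (auto simp: K_def)
qed

end
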